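(* Let $n\ge 1$ and let $f$ be a real-valued function on the product states of $\mathcal{H}_n=\otimes^n\mathbb{C}^2$ such that there is a constant $c$ with $\sum_{i=1}^{2^n} f(u_i)=c$ for every unentangled orthonormal basis (UOB) $\{u_1,\dots,u_{2^n}\}$ of $\mathcal{H}_n$. Then for each subset $J\subset\Omega_n=\{1,\dots,n\}$ there exists a function $\phi_J$ on $F^{n-|J|}$ (with $F^0=\{\omega\}$ and $\phi_{\Omega_n}(\omega)=c$) such that for every $z\in F_n$, \[ \sum_{L\subset J} f(\sigma_L(z))=\phi_J(\tau_J(z)). \]
   Context: One-qubit states are points of $\mathbb{P}^1(\mathbb{C})$, identified with $\mathbb{C}\cup\{\infty\}$ via $(x,y)\mapsto x/y$. Let $\sigma:\mathbb{C}^2\to\mathbb{C}^2$, $\sigma(x,y)=(-\bar y,\bar x)$; it induces on $\mathbb{C}\cup\{\infty\}$ the map $\sigma z=-1/\bar z$, and $\sigma v$ is (up to phase) the unique state orthogonal to $v$; write $\hat a=\sigma a$. The fundamental domain is $F=\{z\in\mathbb{C}:|z|<1\}\cup\{z\in\mathbb{C}:|z|=1,\ \operatorname{Im}z>0\}\cup\{1\}$. A product (unentangled) state of $\mathcal{H}_n$ is $z_1\otimes\cdots\otimes z_n$ with each $z_i$ a one-qubit state; $F_n=F\otimes\cdots\otimes F$ is the set of product states with all $z_i\in F$, and $F^m$ denotes the direct product of $m$ copies of $F$. A UOB of $\mathcal{H}_n$ is an orthonormal basis consisting of product unit vectors. For $J\subset\Omega_n$, $\sigma_J=T_1\otimes\cdots\otimes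 T_n$ with $T_j=\sigma$ if $j\in J$ and $T_j=\mathbb{I}$ otherwise. For $z=z_1\otimes\cdots\otimes z_n\in F_n$ and $J\ne\Omega_n$ with $\Omega_n\setminus J=\{i_1<\dots<i_k\}$, set $\tau_J(z)=(z_{i_1},\dots,z_{i_k})\in F^{k}$; for $J=\Omega_n$, $\tau_J(z)=\omega$. *)

theory Defs
  imports Complex_Main "HOL-Library.Sublist"
begin

text \<open>One-qubit states: points of P^1(C) = C \<union> {\<infinity>}, represented as complex option
  (None = \<infinity>).  A one-qubit vector is a pair (x,y) of complex numbers; its state is x/y.\<close>

type_synonym qstate = "complex option"

definition ratio :: "complex \<times> complex \<Rightarrow> qstate" where
  "ratio v = (if snd v = 0 then None else Some (fst v / snd v))"

definition sig :: "qstate \<Rightarrow> qstate" where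
  "sig p = (case p of None \<Rightarrow> Some 0
              | Some z \<Rightarrow> (if z = 0 then None else Some (- 1 / cnj z)))"

definition Fdom :: "qstate set" where
  "Fdom = {Some z | z. cmod z < 1 \<or> (cmod z = 1 \<and> Im z > 0) \<or> z = 1}"

text \<open>H_n: vectors are coefficient functions on bit strings of length n
  (computational basis); inner product is the standard one.\<close>
definition inner_n :: "nat \<Rightarrow> (bool list \<Rightarrow> complex) \<Rightarrow> (bool list \<Rightarrow> complex) \<Rightarrow> complex" where
  "inner_n n u v = (\<Sum>b\<in>{b. length b = n}. cnj (u b) * v b)"

definition tensor :: "(complex \<times> complex) list \<Rightarrow> bool list \<Rightarrow> complex" where
  "tensor qs b = (\<Prod>i<length qs. (if b ! i then snd (qs ! i) else fst (qs ! i)))"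

text \<open>An unentangled orthonormal basis of H_n, given as an indexed family
  u_1,...,u_{2^n} (indices 0..2^n-1) of product vectors, each presented by its
  list of n one-qubit factors.\<close>
definition is_UOB :: "nat \<Rightarrow> (nat \<Rightarrow> (complex \<times> complex) list) \<Rightarrow> bool" where
  "is_UOB n qs \<longleftrightarrow>
     (\<forall>i<2^n. length (qs i) = n) \<and>
     (\<forall>i<2^n. \<forall>j<2^n. inner_n n (tensor (qs i)) (tensor (qs j)) = (if i = j then 1 else 0)) \<and>
     (\<forall>v :: bool list \<Rightarrow> complex. \<exists>a :: nat \<Rightarrow> complex.
        \<forall>b. length b = n \<longrightarrow> v b = (\<Sum>i<2^n. a i * tensor (qs i) b))"

definition pstate :: "(complex \<times> complex) list \<Rightarrow> qstate list" where
  "pstate qs = map ratio qs"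

text \<open>sigma_L, for L \<subseteq> {1..n} (positions are 1-based).\<close>
definition sigmaL :: "nat set \<Rightarrow> qstate list \<Rightarrow> qstate list" where
  "sigmaL L z = map (\<lambda>i. if Suc i \<in> L then sig (z ! i) else z ! i) [0..<length z]"

text \<open>tau_J(z) = (z_i)_{i \<notin> J}, in increasing order; the empty list plays the role of \<omega>.\<close>
definition tauJ :: "nat set \<Rightarrow> qstate list \<Rightarrow> qstate list" where
  "tauJ J z = nths z {i. Suc i \<notin> J}"

end

theory Submission
  imports Defs "Jordan_Normal_Form.Determinant"
begin

text \<open>Index a basis by bit strings \<open>b\<close>: if \<open>b\<close> vanishes outside \<open>J\<close>, take
  \<open>\<sigma>\<^sub>L(z)\<close> with \<open>L\<close> the support of \<open>b\<close>; otherwise use \<open>z\<^sub>k\<close> or \<open>\<sigma>z\<^sub>k\<close> (according to \<open>b\<^sub>k\<close>) at positions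
  outside \<open>J\<close> and \<open>0\<close> or \<open>\<infinity>\<close> at positions in \<open>J\<close>. Any two distinct members have orthogonal factors
  at some position, so this is a UOB. Its members of the second kind depend only on \<open>\<tau>\<^sub>J(z)\<close>,
  so the hypothesis forces \<open>\<Sum>\<^sub>L f(\<sigma>\<^sub>L z)\<close> to be \<open>c\<close> minus a function of \<open>\<tau>\<^sub>J(z)\<close>.\<close>

definition bits :: "nat \<Rightarrow> nat \<Rightarrow> bool list" where
  "bits n r = map (bit r) [0..<n]"

lemma finite_bool_lists: "finite {b::bool list. length b = n}"
  using finite_lists_length_eq[of "UNIV::bool set" n] by simp

lemma card_bool_lists: "card {b::bool list. length b = n} = 2^n"
  using card_lists_length_eq[of "UNIV::bool set" n] by simp

lemma inj_on_bits: "inj_on (bits n) {..<2^n}"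
proof (rule inj_onI)
  fix r s assume r: "r \<in> {..<2^n}" and s: "s \<in> {..<2^n}" and eq: "bits n r = bits n s"
  have "bit r k = bit s k" for k
  proof (cases "k < n")
    case True
    then show ?thesis using eq unfolding bits_def by (metis map_eq_conv atLeastLessThan_iff set_upt zero_le)
  next
    case False
    have "take_bit n r = r" "take_bit n s = s" using r s by (auto simp: take_bit_nat_eq_self_iff)
    then show ?thesis using False by (metis bit_take_bit_iff)
  qed
  then show "r = s" by (simp add: bit_eq_iff)
qed

lemma bij_betw_bits: "bij_betw (bits n) {..<2^n} {b. length b = n}"
proof -
  have sub: "bits n ` {..<2^n} \<subseteq> {b. length b = n}" by (auto simp: bits_def)
  have "card (bits n ` {..<2^n}) = 2^n" using inj_on_bits card_image by fastforce
  then have "bits n ` {..<2^n} = {b. length b = n}"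
    using sub by (simp add: card_subset_eq finite_bool_lists card_bool_lists)
  then show ?thesis using inj_on_bits by (simp add: bij_betw_def)
qed

lemma sum_bits: "(\<Sum>i<2^n. g (bits n i)) = (\<Sum>b\<in>{b. length b = n}. g b)"
  using sum.reindex_bij_betw[OF bij_betw_bits, of g] by simp

lemma sum_bool_lists_Suc:
  "(\<Sum>b\<in>{b::bool list. length b = Suc n}. g b) = (\<Sum>b\<in>{b. length b = n}. g (False#b) + g (True#b))"
proof -
  have split: "{b::bool list. length b = Suc n} = Cons False ` {b. length b = n} \<union> Cons True ` {b. length b = n}"
    by (auto simp: length_Suc_conv)
  have "(\<Sum>b\<in>{b::bool list. length b = Suc n}. g b)
      = sum g (Cons False ` {b. length b = n}) + sum g (Cons True ` {b. length b = n})"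
    unfolding split by (rule sum.union_disjoint) (auto simp: finite_bool_lists)
  also have "\<dots> = (\<Sum>b\<in>{b. length b = n}. g (False#b)) + (\<Sum>b\<in>{b. length b = n}. g (True#b))"
    by (simp add: sum.reindex)
  finally show ?thesis by (simp add: sum.distrib)
qed

definition qinner :: "complex \<times> complex \<Rightarrow> complex \<times> complex \<Rightarrow> complex" where
  "qinner p q = cnj (fst p) * fst q + cnj (snd p) * snd q"

lemma tensor_Cons: "tensor (q#qs) (x#b) = (if x then snd q else fst q) * tensor qs b"
proof -
  have "tensor (q#qs) (x#b) = (if x then snd q else fst q) *
     (\<Prod>i<length qs. (if (x#b) ! Suc i then snd ((q#qs) ! Suc i) else fst ((q#qs) ! Suc i)))"
    unfolding tensor_def by (simp only: length_Cons prod.lessThan_Suc_shift) simp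
  also have "(\<Prod>i<length qs. (if (x#b) ! Suc i then snd ((q#qs) ! Suc i) else fst ((q#qs) ! Suc i)))
      = tensor qs b"
    unfolding tensor_def by (rule prod.cong) auto
  finally show ?thesis .
qed

lemma inner_n_tensor:
  "length p = n \<Longrightarrow> length q = n \<Longrightarrow> inner_n n (tensor p) (tensor q) = (\<Prod>k<n. qinner (p!k) (q!k))"
proof (induction n arbitrary: p q)
  case 0
  then show ?case by (simp add: inner_n_def tensor_def)
next
  case (Suc n)
  then obtain a p' b q' where p: "p = a#p'" and q: "q = b#q'" and len: "length p' = n" "length q' = n"
    by (metis length_Suc_conv)
  have "inner_n (Suc n) (tensor p) (tensor q) =
     (\<Sum>c\<in>{c. length c = n}. cnj (fst a) * fst b * (cnj (tensor p' c) * tensor q' c)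
        + cnj (snd a) * snd b * (cnj (tensor p' c) * tensor q' c))"
    unfolding inner_n_def sum_bool_lists_Suc p q tensor_Cons by (simp add: algebra_simps)
  also have "\<dots> = qinner a b * inner_n n (tensor p') (tensor q')"
    by (simp add: inner_n_def qinner_def sum_distrib_left algebra_simps sum.distrib)
  also have "\<dots> = (\<Prod>k<Suc n. qinner (p!k) (q!k))"
    using Suc.IH[OF len] p q by (simp add: prod.lessThan_Suc_shift del: prod.lessThan_Suc)
  finally show ?case .
qed

text \<open>The coordinate matrix of the family has a left inverse, hence a right inverse; the latter is
  the completeness relation.\<close>

lemma orthonormal_spans:
  fixes u :: "nat \<Rightarrow> bool list \<Rightarrow> complex" and v :: "bool list \<Rightarrow> complex"
  assumes orth: "\<forall>i<2^n. \<forall>j<2^n. inner_n n (u i) (u j) = (if i = j then 1 else 0)"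
  shows "\<exists>a. \<forall>b. length b = n \<longrightarrow> v b = (\<Sum>i<2^n. a i * u i b)"
proof -
  define N where "N = (2::nat)^n"
  define A where "A = mat N N (\<lambda>(i,r). cnj (u i (bits n r)))"
  define B where "B = mat N N (\<lambda>(r,j). u j (bits n r))"
  have inner: "inner_n n x y = (\<Sum>r<N. cnj (x (bits n r)) * y (bits n r))" for x y
    unfolding inner_n_def N_def using sum_bits[where n=n and g="\<lambda>b. cnj (x b) * y b"] by simp
  have AB: "A * B = 1\<^sub>m N"
  proof (rule eq_matI)
    fix i j assume ij: "i < dim_row (1\<^sub>m N)" "j < dim_col (1\<^sub>m N)"
    then have "(A * B) $$ (i, j) = (\<Sum>r<N. cnj (u i (bits n r)) * u j (bits n r))"
      by (simp add: A_def B_def scalar_prod_def atLeast0LessThan)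
    also have "\<dots> = inner_n n (u i) (u j)" by (simp add: inner)
    also have "\<dots> = 1\<^sub>m N $$ (i, j)" using orth ij by (simp add: N_def)
    finally show "(A * B) $$ (i, j) = 1\<^sub>m N $$ (i, j)" .
  qed (auto simp: A_def B_def)
  have BA: "B * A = 1\<^sub>m N"
    by (rule mat_mult_left_right_inverse[OF _ _ AB]) (auto simp: A_def B_def)
  have completeness: "(\<Sum>i<N. u i (bits n r) * cnj (u i (bits n s))) = (if r = s then 1 else 0)"
    if "r < N" "s < N" for r s
  proof -
    have "(B * A) $$ (r, s) = (\<Sum>i<N. u i (bits n r) * cnj (u i (bits n s)))"
      using that by (simp add: A_def B_def scalar_prod_def atLeast0LessThan)
    then show ?thesis using BA that by simp
  qed
  define a where "a i = inner_n n (u i) v" for i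
  have "v b = (\<Sum>i<2^n. a i * u i b)" if b: "length b = n" for b
  proof -
    obtain r where r: "r < N" "b = bits n r"
      using bij_betw_bits[of n] b unfolding bij_betw_def N_def
      by (metis (mono_tags, lifting) imageE lessThan_iff mem_Collect_eq)
    have "(\<Sum>i<N. a i * u i b) = (\<Sum>i<N. \<Sum>s<N. v (bits n s) * (u i (bits n r) * cnj (u i (bits n s))))"
      unfolding a_def inner r(2) by (simp add: sum_distrib_left mult_ac)
    also have "\<dots> = (\<Sum>s<N. v (bits n s) * (\<Sum>i<N. u i (bits n r) * cnj (u i (bits n s))))"
      by (subst sum.swap) (simp add: sum_distrib_left)
    also have "\<dots> = (\<Sum>s<N. if s = r then v (bits n s) else 0)"
      by (rule sum.cong) (auto simp: completeness r)
    also have "\<dots> = v b" using r by simp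
    finally show ?thesis by (simp add: N_def)
  qed
  then show ?thesis by blast
qed

lemma is_UOB_of_orthogonal_factors:
  assumes len: "\<forall>i<2^n. length (qs i) = n"
    and unit: "\<forall>i<2^n. \<forall>k<n. qinner (qs i ! k) (qs i ! k) = 1"
    and sep: "\<forall>i<2^n. \<forall>j<2^n. i \<noteq> j \<longrightarrow> (\<exists>k<n. qinner (qs i ! k) (qs j ! k) = 0)"
  shows "is_UOB n qs"
proof -
  have orth: "\<forall>i<2^n. \<forall>j<2^n. inner_n n (tensor (qs i)) (tensor (qs j)) = (if i = j then 1 else 0)"
  proof (intro allI impI)
    fix i j :: nat assume ij: "i < 2^n" "j < 2^n"
    show "inner_n n (tensor (qs i)) (tensor (qs j)) = (if i = j then 1 else 0)"
    proof (cases "i = j")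
      case True
      then show ?thesis using ij unit by (simp add: inner_n_tensor len)
    next
      case False
      then obtain k where "k < n" "qinner (qs i ! k) (qs j ! k) = 0" using sep ij by blast
      then show ?thesis using False ij by (simp add: inner_n_tensor len) (metis lessThan_iff)
    qed
  qed
  then have "\<forall>v. \<exists>a. \<forall>b. length b = n \<longrightarrow> v b = (\<Sum>i<2^n. a i * tensor (qs i) b)"
    using orthonormal_spans[OF orth] by blast
  then show ?thesis unfolding is_UOB_def using len orth by blast
qed

definition qnorm :: "complex \<Rightarrow> complex" where
  "qnorm a = complex_of_real (sqrt (1 + (cmod a)^2))"

text \<open>Normalised representatives of \<open>a\<close> (for \<open>x = False\<close>) and of \<open>\<sigma>a = -1/cnj a\<close> (for \<open>x = True\<close>).\<close>
definition qubit_basis :: "complex \<Rightarrow> bool \<Rightarrow> complex \<times> complex" where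
  "qubit_basis a x = (if x then (- 1 / qnorm a, cnj a / qnorm a) else (a / qnorm a, 1 / qnorm a))"

lemma qnorm_nonzero: "qnorm a \<noteq> 0"
  unfolding qnorm_def by (smt (verit) of_real_eq_0_iff real_sqrt_gt_zero zero_le_power2)

lemma qnorm_square: "qnorm a * qnorm a = 1 + a * cnj a"
proof -
  have "qnorm a * qnorm a = complex_of_real (1 + (cmod a)^2)"
    unfolding qnorm_def by (simp flip: of_real_mult)
  also have "\<dots> = 1 + a * cnj a" using complex_norm_square[of a] by simp
  finally show ?thesis .
qed

lemma qinner_qubit_basis: "qinner (qubit_basis a x) (qubit_basis a y) = (if x = y then 1 else 0)"
proof -
  have "cnj (qnorm a) = qnorm a" unfolding qnorm_def by simp
  moreover have "1 + a * cnj a \<noteq> 0" using qnorm_nonzero qnorm_square by (metis mult_eq_0_iff)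
  ultimately show ?thesis
    using qnorm_nonzero[of a] qnorm_square[of a] unfolding qinner_def qubit_basis_def
    by (auto simp: field_simps)
qed

lemma ratio_qubit_basis: "ratio (qubit_basis a x) = (if x then sig (Some a) else Some a)"
  using qnorm_nonzero[of a] unfolding ratio_def qubit_basis_def sig_def by (auto simp: field_simps)

definition supported_in :: "nat set \<Rightarrow> bool list \<Rightarrow> bool" where
  "supported_in J b \<longleftrightarrow> (\<forall>k<length b. b ! k \<longrightarrow> Suc k \<in> J)"

definition uob_coord :: "nat set \<Rightarrow> qstate list \<Rightarrow> bool list \<Rightarrow> nat \<Rightarrow> complex" where
  "uob_coord J z b k = (if Suc k \<in> J \<and> \<not> supported_in J b then 0 else the (z ! k))"

definition uob_factors :: "nat set \<Rightarrow> qstate list \<Rightarrow> bool list \<Rightarrow> (complex \<times> complex) list" where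
  "uob_factors J z b = map (\<lambda>k. qubit_basis (uob_coord J z b k) (b ! k)) [0..<length b]"

lemma nth_uob_factors:
  "k < length b \<Longrightarrow> uob_factors J z b ! k = qubit_basis (uob_coord J z b k) (b ! k)"
  by (simp add: uob_factors_def)

lemma supported_in_eqI:
  assumes "length b = length c" "\<forall>k<length b. Suc k \<notin> J \<longrightarrow> b ! k = c ! k"
  shows "supported_in J b = supported_in J c"
  using assms unfolding supported_in_def by metis

lemma is_UOB_uob_factors: "is_UOB n (\<lambda>i. uob_factors J z (bits n i))"
proof (rule is_UOB_of_orthogonal_factors)
  have len: "length (bits n i) = n" for i by (simp add: bits_def)
  show "\<forall>i<2^n. length (uob_factors J z (bits n i)) = n"
    by (simp add: uob_factors_def len)
  show "\<forall>i<2^n. \<forall>k<n. qinner (uob_factors J z (bits n i) ! k) (uob_factors J z (bits n i) ! k) = 1"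
    by (simp add: nth_uob_factors len qinner_qubit_basis)
  show "\<forall>i<2^n. \<forall>j<2^n. i \<noteq> j \<longrightarrow>
      (\<exists>k<n. qinner (uob_factors J z (bits n i) ! k) (uob_factors J z (bits n j) ! k) = 0)"
  proof (intro allI impI)
    fix i j :: nat assume ij: "i < 2^n" "j < 2^n" "i \<noteq> j"
    let ?b = "bits n i" and ?c = "bits n j"
    have "?b \<noteq> ?c" using inj_on_bits[of n] ij unfolding inj_on_def by blast
    then obtain k where k: "k < n" "?b ! k \<noteq> ?c ! k"
      using nth_equalityI[of ?b ?c] len by metis
    have "\<exists>k<n. ?b ! k \<noteq> ?c ! k \<and> uob_coord J z ?b k = uob_coord J z ?c k"
      (is "\<exists>k<n. ?differ k")
    proof (cases "\<exists>k<n. Suc k \<notin> J \<and> ?b ! k \<noteq> ?c ! k")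
      case True
      then show ?thesis by (auto simp: uob_coord_def)
    next
      case False
      then have "supported_in J ?b = supported_in J ?c" by (intro supported_in_eqI) (auto simp: len)
      then show ?thesis using k by (auto simp: uob_coord_def)
    qed
    then obtain k where "k < n" "?differ k" by blast
    then show "\<exists>k<n. qinner (uob_factors J z ?b ! k) (uob_factors J z ?c ! k) = 0"
      by (intro exI[of _ k]) (simp add: nth_uob_factors len qinner_qubit_basis)
  qed
qed

definition support_list :: "nat \<Rightarrow> nat set \<Rightarrow> bool list" where
  "support_list n L = map (\<lambda>k. Suc k \<in> L) [0..<n]"

lemma bij_betw_support_list:
  assumes "J \<subseteq> {1..n}"
  shows "bij_betw (support_list n) (Pow J) {b. length b = n \<and> supported_in J b}"
proof -
  have "inj_on (support_list n) (Pow J)"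
  proof (rule inj_onI)
    fix L L' assume L: "L \<in> Pow J" "L' \<in> Pow J" and eq: "support_list n L = support_list n L'"
    have "x \<in> L \<longleftrightarrow> x \<in> L'" for x
    proof (cases "x \<in> {1..n}")
      case True
      then obtain k where "x = Suc k" "k < n" by (cases x) auto
      then show ?thesis using eq unfolding support_list_def
        by (metis (no_types, lifting) diff_zero length_map length_upt nth_map nth_upt plus_nat.add_0)
    next
      case False
      then show ?thesis using L assms by auto
    qed
    then show "L = L'" by blast
  qed
  moreover have "support_list n ` Pow J = {b. length b = n \<and> supported_in J b}"
  proof
    show "support_list n ` Pow J \<subseteq> {b. length b = n \<and> supported_in J b}"
      by (auto simp: support_list_def supported_in_def)
    show "{b. length b = n \<and> supported_in J b} \<subseteq> support_list n ` Pow J"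
    proof
      fix b assume b: "b \<in> {b. length b = n \<and> supported_in J b}"
      define L where "L = {Suc k | k. k < n \<and> b ! k}"
      have "L \<in> Pow J" using b unfolding L_def supported_in_def by auto
      moreover have "support_list n L = b"
        using b unfolding support_list_def L_def by (intro nth_equalityI) auto
      ultimately show "b \<in> support_list n ` Pow J" by blast
    qed
  qed
  ultimately show ?thesis by (simp add: bij_betw_def)
qed

lemma pstate_uob_factors_support_list:
  assumes "L \<subseteq> J" "length z = n" "set z \<subseteq> Fdom"
  shows "pstate (uob_factors J z (support_list n L)) = sigmaL L z"
proof -
  have "supported_in J (support_list n L)"
    using assms(1) by (auto simp: supported_in_def support_list_def)
  moreover have "Some (the (z ! k)) = z ! k" if "k < n" for k
  proof -
    have "z ! k \<in> Fdom" using that assms(2,3) nth_mem[of k z] by auto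
    then show ?thesis unfolding Fdom_def by auto
  qed
  ultimately show ?thesis
    using assms(2) unfolding pstate_def uob_factors_def sigmaL_def
    by (auto simp: support_list_def uob_coord_def ratio_qubit_basis)
qed

lemma nth_eq_if_nths_eq:
  "nths xs I = nths ys I \<Longrightarrow> length xs = length ys \<Longrightarrow> k < length xs \<Longrightarrow> k \<in> I \<Longrightarrow> xs ! k = ys ! k"
proof (induction xs arbitrary: ys I k)
  case Nil
  then show ?case by simp
next
  case (Cons x xs)
  then obtain y ys' where ys: "ys = y#ys'" by (cases ys) auto
  have eq: "(if 0 \<in> I then [x] else []) @ nths xs {j. Suc j \<in> I}
      = (if 0 \<in> I then [y] else []) @ nths ys' {j. Suc j \<in> I}"
    using Cons.prems(1) unfolding ys nths_Cons .
  show ?case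
  proof (cases k)
    case 0
    then show ?thesis using eq Cons.prems ys by (auto split: if_splits)
  next
    case (Suc k')
    have "nths xs {j. Suc j \<in> I} = nths ys' {j. Suc j \<in> I}" using eq by (auto split: if_splits)
    moreover have "length xs = length ys'" "k' < length xs" "k' \<in> {j. Suc j \<in> I}"
      using Cons.prems ys Suc by auto
    ultimately have "xs ! k' = ys' ! k'" by (rule Cons.IH)
    then show ?thesis using ys Suc by simp
  qed
qed

lemma uob_factors_unsupported_tauJ:
  assumes "\<not> supported_in J b" "length z = length b" "length z' = length b" "tauJ J z = tauJ J z'"
  shows "uob_factors J z b = uob_factors J z' b"
proof -
  have "z ! k = z' ! k" if "k < length b" "Suc k \<notin> J" for k
    using nth_eq_if_nths_eq[of z "{i. Suc i \<notin> J}" z' k] that assms(2-4) unfolding tauJ_def by simp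
  then show ?thesis
    unfolding uob_factors_def uob_coord_def using assms(1) by (intro map_cong refl) simp
qed

lemma sum_sigmaL_plus_unsupported:
  assumes hyp: "\<forall>qs. is_UOB n qs \<longrightarrow> (\<Sum>i<2^n. f (pstate (qs i))) = c"
    and J: "J \<subseteq> {1..n}" and z: "length z = n" "set z \<subseteq> Fdom"
  shows "(\<Sum>L\<in>Pow J. f (sigmaL L z))
      + (\<Sum>b\<in>{b. length b = n \<and> \<not> supported_in J b}. f (pstate (uob_factors J z b))) = c"
proof -
  let ?g = "\<lambda>b. f (pstate (uob_factors J z b))"
  have "c = (\<Sum>b\<in>{b. length b = n}. ?g b)"
    using hyp[rule_format, OF is_UOB_uob_factors] sum_bits[of ?g n] by simp
  also have "\<dots> = sum ?g ({b. length b = n} \<inter> {b. supported_in J b})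
      + sum ?g ({b. length b = n} - {b. supported_in J b})"
    by (rule sum.Int_Diff[OF finite_bool_lists])
  also have "{b. length b = n} \<inter> {b. supported_in J b} = {b. length b = n \<and> supported_in J b}"
    by blast
  also have "{b. length b = n} - {b. supported_in J b} = {b. length b = n \<and> \<not> supported_in J b}"
    by blast
  also have "(\<Sum>b\<in>{b. length b = n \<and> supported_in J b}. ?g b) = (\<Sum>L\<in>Pow J. ?g (support_list n L))"
    by (rule sum.reindex_bij_betw[OF bij_betw_support_list[OF J], symmetric])
  also have "\<dots> = (\<Sum>L\<in>Pow J. f (sigmaL L z))"
    by (rule sum.cong[OF refl]) (simp add: pstate_uob_factors_support_list z)
  finally show ?thesis by simp
qed

lemma factor_through:
  assumes "\<forall>x\<in>A. \<forall>y\<in>A. h x = h y \<longrightarrow> g x = g y"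
  shows "\<exists>\<phi>. \<forall>x\<in>A. g x = \<phi> (h x)"
proof
  show "\<forall>x\<in>A. g x = (\<lambda>t. g (SOME y. y \<in> A \<and> h y = t)) (h x)"
  proof
    fix x assume x: "x \<in> A"
    define y where "y = (SOME y. y \<in> A \<and> h y = h x)"
    have "y \<in> A \<and> h y = h x" unfolding y_def using x by (intro someI) blast
    then have "g x = g y" using assms x by metis
    then show "g x = g (SOME y. y \<in> A \<and> h y = h x)" by (simp add: y_def)
  qed
qed

theorem lemma1:
  fixes n :: nat and f :: "qstate list \<Rightarrow> real" and c :: real
  assumes "n \<ge> 1"
    and "\<forall>qs. is_UOB n qs \<longrightarrow> (\<Sum>i<2^n. f (pstate (qs i))) = c"
  shows "\<forall>J. J \<subseteq> {1..n} \<longrightarrow>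
           (\<exists>\<phi> :: qstate list \<Rightarrow> real.
              (J = {1..n} \<longrightarrow> \<phi> [] = c) \<and>
              (\<forall>z. length z = n \<and> set z \<subseteq> Fdom \<longrightarrow>
                 (\<Sum>L\<in>Pow J. f (sigmaL L z)) = \<phi> (tauJ J z)))"
proof (intro allI impI)
  fix J assume J: "J \<subseteq> {1..n}"
  let ?A = "{z. length z = n \<and> set z \<subseteq> Fdom}"
  let ?S = "\<lambda>z. \<Sum>L\<in>Pow J. f (sigmaL L z)"
  let ?R = "\<lambda>z. \<Sum>b\<in>{b. length b = n \<and> \<not> supported_in J b}. f (pstate (uob_factors J z b))"
  have S_eq: "?S z = c - ?R z" if "z \<in> ?A" for z
  proof -
    have "?S z + ?R z = c" using that by (intro sum_sigmaL_plus_unsupported[OF assms(2) J]) auto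
    then show ?thesis by linarith
  qed
  show "\<exists>\<phi>. (J = {1..n} \<longrightarrow> \<phi> [] = c) \<and>
      (\<forall>z. length z = n \<and> set z \<subseteq> Fdom \<longrightarrow> ?S z = \<phi> (tauJ J z))"
  proof (cases "J = {1..n}")
    case True
    then have "{b. length b = n \<and> \<not> supported_in J b} = {}" by (auto simp: supported_in_def)
    then have "?S z = c" if "z \<in> ?A" for z using S_eq[OF that] by (simp only: sum.empty diff_zero)
    then show ?thesis by (intro exI[of _ "\<lambda>_. c"]) simp
  next
    case False
    have "?S z = ?S z'" if "z \<in> ?A" "z' \<in> ?A" "tauJ J z = tauJ J z'" for z z'
    proof -
      have "?R z = ?R z'"
      proof (rule sum.cong[OF refl])
        fix b assume "b \<in> {b. length b = n \<and> \<not> supported_in J b}"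
        then show "f (pstate (uob_factors J z b)) = f (pstate (uob_factors J z' b))"
          using uob_factors_unsupported_tauJ[of J b z z'] that by simp
      qed
      then show ?thesis using S_eq[OF that(1)] S_eq[OF that(2)] by simp
    qed
    then obtain \<phi> where "\<forall>z\<in>?A. ?S z = \<phi> (tauJ J z)"
      using factor_through[of ?A "tauJ J" ?S] by blast
    then show ?thesis using False by blast
  qed
qed

end
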